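(* For any $\alpha\in(0,1)$, any $f\in\mathcal V_1$ and any $x>0$, $$c(f)\le\frac{1+2\alpha}{3(1-\alpha)}\,c_{1,\alpha}\,\big(1-f(x)\big)^{\min(1-\alpha,\alpha)}\big(1+x^{-2\alpha}\big).$$
   Context: Fix $\alpha\in(0,1)$ and set $c_{1,\alpha}=\frac{2^{2\alpha-1}\Gamma(\frac12+\alpha)}{\sqrt{\pi}\,\Gamma(1-\alpha)}$. Let $\rho(x)=(1+|x|)^{-\alpha}$ and $\mathcal V_0=\{f\in C(\mathbb{R}): f\text{ even},\ \|\rho f\|_{L^\infty}<\infty\}$. Let $\eta=2\left(\frac{3}{2(3-2\alpha)(5-2\alpha)(1+4^{\alpha})}\right)^{1/\min(\alpha,1-\alpha)}$. $\mathcal V_1$ is the set of $f\in\mathcal V_0$ such that $f(0)=1$; $f\ge0$ and $f$ is non-increasing on $[0,\infty)$; $x\mapsto f(\sqrt x)$ is convex on $[0,\infty)$; $f(x)\ge\max(0,1-x^2)$ for all $x$; and $f'_-(1/2)\le-\eta$. For $f\in\mathcal V_1$, $c(f)=\frac{2\alpha(1+2\alpha)}{3}c_{1,\alpha}\int_0^\infty\frac{1-f(\xi)}{\xi^{1+2\alpha}}\,d\xi$. *)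

theory Defs
  imports "HOL-Analysis.Analysis"
begin

definition c1 :: "real \<Rightarrow> real" where
  "c1 \<alpha> = 2 powr (2*\<alpha> - 1) * Gamma (1/2 + \<alpha>) / (sqrt pi * Gamma (1 - \<alpha>))"

definition rho :: "real \<Rightarrow> real \<Rightarrow> real" where
  "rho \<alpha> x = (1 + \<bar>x\<bar>) powr (- \<alpha>)"

definition V0 :: "real \<Rightarrow> (real \<Rightarrow> real) set" where
  "V0 \<alpha> = {f. continuous_on UNIV f \<and> (\<forall>x. f (- x) = f x)
               \<and> (\<exists>M. \<forall>x. \<bar>rho \<alpha> x * f x\<bar> \<le> M)}"

definition eta :: "real \<Rightarrow> real" where
  "eta \<alpha> = 2 * (3 / (2 * (3 - 2*\<alpha>) * (5 - 2*\<alpha>) * (1 + 4 powr \<alpha>)))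
                 powr (1 / min \<alpha> (1 - \<alpha>))"

definition V1 :: "real \<Rightarrow> (real \<Rightarrow> real) set" where
  "V1 \<alpha> = {f. f \<in> V0 \<alpha> \<and> f 0 = 1
     \<and> (\<forall>x. 0 \<le> x \<longrightarrow> 0 \<le> f x)
     \<and> (\<forall>x y. 0 \<le> x \<longrightarrow> x \<le> y \<longrightarrow> f y \<le> f x)
     \<and> convex_on {0..} (\<lambda>x. f (sqrt x))
     \<and> (\<forall>x. max 0 (1 - x\<^sup>2) \<le> f x)
     \<and> (\<exists>D. (f has_real_derivative D) (at (1/2) within {..1/2}) \<and> D \<le> - eta \<alpha>)}"

definition cf :: "real \<Rightarrow> (real \<Rightarrow> real) \<Rightarrow> real" where
  "cf \<alpha> f = 2*\<alpha>*(1 + 2*\<alpha>) / 3 * c1 \<alpha> *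
     (LBINT \<xi>:{0<..}. (1 - f \<xi>) / \<xi> powr (1 + 2*\<alpha>))"

end

theory Submission
  imports Defs
begin

text \<open>
  Put \<open>t = 1 - f x\<close>. On \<open>(0, x]\<close> monotonicity and \<open>f \<ge> 1 - \<xi>\<^sup>2\<close> give
  \<open>1 - f \<xi> \<le> min t \<xi>\<^sup>2\<close>; on \<open>[x, \<infinity>)\<close> convexity of \<open>s \<mapsto> f (sqrt s)\<close> together
  with \<open>f 0 = 1\<close> makes the secant slopes from the origin increase, so
  \<open>1 - f \<xi> \<le> min 1 (t \<xi>\<^sup>2 / x\<^sup>2)\<close>. Against the weight \<open>\<xi> powr (-1 - 2\<alpha>)\<close> the majorant
  \<open>min b (c \<xi>\<^sup>2)\<close> integrates to \<open>b powr (1 - \<alpha>) * c powr \<alpha> / (2\<alpha>(1 - \<alpha>))\<close>, which yields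
  \<open>t powr (1 - \<alpha>) + t powr \<alpha> * x powr (-2\<alpha>)\<close>; both powers of \<open>t \<in> [0, 1]\<close> are at most
  \<open>t powr min \<alpha> (1 - \<alpha>)\<close>.
\<close>

lemma has_integral_min_square_powr:
  fixes a b :: real
  assumes a: "0 < a" "a < 1" and b: "0 \<le> b"
  shows "((\<lambda>\<xi>. min b (\<xi>\<^sup>2) * \<xi> powr (-1 - 2*a)) has_integral b powr (1 - a) / (2*a*(1 - a))) {0<..}"
proof (cases "b = 0")
  case True
  then show ?thesis
    using has_integral_0 by (rule_tac has_integral_eq[of _ "\<lambda>_. 0"]) auto
next
  case False
  then have "0 < b" using b by simp
  define r where "r = sqrt b"
  have r: "0 < r" "r\<^sup>2 = b" using \<open>0 < b\<close> by (auto simp: r_def)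
  have rpowr: "r powr (2 * p) = b powr p" for p
  proof -
    have "r powr (2 * p) = (b powr (1/2)) powr (2 * p)"
      unfolding r_def using \<open>0 < b\<close> by (simp add: powr_half_sqrt)
    also have "\<dots> = b powr p"
      by (simp add: powr_powr)
    finally show ?thesis .
  qed
  have "r powr (2 - 2*a) = b powr (1 - a)"
    using rpowr[of "1 - a"] by (simp add: right_diff_distrib)
  then have "r powr (1 - 2*a + 1) / (1 - 2*a + 1) = b powr (1 - a) / (2 - 2*a)"
    by simp
  then have "((\<lambda>\<xi>. \<xi> powr (1 - 2*a)) has_integral b powr (1 - a) / (2 - 2*a)) {0..r}"
    using has_integral_powr_from_0[of "1 - 2*a" r] a r by simp
  then have lower: "((\<lambda>\<xi>. min b (\<xi>\<^sup>2) * \<xi> powr (-1 - 2*a)) has_integral b powr (1 - a) / (2 - 2*a)) {0..r}"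
  proof (rule has_integral_eq[rotated])
    fix \<xi> assume "\<xi> \<in> {0..r}"
    then have "\<xi>\<^sup>2 \<le> b" "0 \<le> \<xi>" using r by (auto intro!: power_mono)
    moreover have "\<xi> powr (1 - 2*a) = \<xi> powr 2 * \<xi> powr (-1 - 2*a)" if "0 < \<xi>"
      by (simp add: powr_add[symmetric])
    ultimately show "\<xi> powr (1 - 2*a) = min b (\<xi>\<^sup>2) * \<xi> powr (-1 - 2*a)"
      by (cases "\<xi> = 0") auto
  qed
  have "b * (- (r powr (-1 - 2*a + 1)) / (-1 - 2*a + 1)) = b powr 1 * b powr (-a) / (2*a)"
    using \<open>0 < b\<close> a rpowr[of "-a"] by simp
  also have "\<dots> = b powr (1 - a) / (2*a)"
    unfolding powr_add[symmetric] by simp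
  finally have "((\<lambda>\<xi>. b * \<xi> powr (-1 - 2*a)) has_integral b powr (1 - a) / (2*a)) {r..}"
    using has_integral_mult_right[OF has_integral_powr_to_inf[of "-1 - 2*a" r], of b] a \<open>0 < r\<close> by simp
  then have upper: "((\<lambda>\<xi>. min b (\<xi>\<^sup>2) * \<xi> powr (-1 - 2*a)) has_integral b powr (1 - a) / (2*a)) {r..}"
  proof (rule has_integral_eq[rotated])
    fix \<xi> assume "\<xi> \<in> {r..}"
    then have "b \<le> \<xi>\<^sup>2" using r by (auto intro!: power_mono)
    then show "b * \<xi> powr (-1 - 2*a) = min b (\<xi>\<^sup>2) * \<xi> powr (-1 - 2*a)" by simp
  qed
  have "{0..r} \<inter> {r..} = {r}" using r by auto
  then have "((\<lambda>\<xi>. min b (\<xi>\<^sup>2) * \<xi> powr (-1 - 2*a)) has_integral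
               b powr (1 - a) / (2 - 2*a) + b powr (1 - a) / (2*a)) ({0..r} \<union> {r..})"
    by (intro has_integral_Un[OF lower upper]) simp
  moreover have "{0..r} \<union> {r..} = {0..}" using r by auto
  moreover have "b powr (1 - a) / (2 - 2*a) + b powr (1 - a) / (2*a) = b powr (1 - a) / (2*a*(1 - a))"
    using a by (simp add: field_simps)
  ultimately have "((\<lambda>\<xi>. min b (\<xi>\<^sup>2) * \<xi> powr (-1 - 2*a)) has_integral b powr (1 - a) / (2*a*(1 - a))) {0..}"
    by simp
  then show ?thesis
    by (rule iffD1[OF has_integral_spike_set_eq, rotated 2]) (auto intro: negligible_subset[of "{0}"])
qed

lemma has_integral_min_scaled_square_powr:
  fixes a b c :: real
  assumes a: "0 < a" "a < 1" and b: "0 \<le> b" and c: "0 \<le> c"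
  shows "((\<lambda>\<xi>. min b (c * \<xi>\<^sup>2) * \<xi> powr (-1 - 2*a)) has_integral
           b powr (1 - a) * c powr a / (2*a*(1 - a))) {0<..}"
proof (cases "c = 0")
  case True
  then show ?thesis
    using has_integral_0 b by (rule_tac has_integral_eq[of _ "\<lambda>_. 0"]) auto
next
  case False
  with c have "0 < c" by simp
  have "min b (c * \<xi>\<^sup>2) = c * min (b / c) (\<xi>\<^sup>2)" for \<xi>
    using \<open>0 < c\<close> by (simp add: min_mult_distrib_left)
  moreover have "c * (b / c) powr (1 - a) = b powr (1 - a) * c powr a"
    using powr_diff[of c 1 "1 - a"] \<open>0 < c\<close> b by (simp add: powr_divide)
  ultimately show ?thesis
    using has_integral_mult_right[OF has_integral_min_square_powr[of a "b / c"], of c] a b c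
    by (simp add: mult.assoc)
qed

lemma convex_on_secant_from_0:
  fixes g :: "real \<Rightarrow> real"
  assumes g: "convex_on {0..} g" and s: "0 < s0" "s0 \<le> s"
  shows "g 0 - g s \<le> s / s0 * (g 0 - g s0)"
proof (cases "s0 = s")
  case False
  then have "(g 0 - g s0) / (0 - s0) \<le> (g 0 - g s) / (0 - s)"
    using convex_on_slope_le(1)[OF g, of 0 s s0] s by simp
  then show ?thesis
    using s by (simp add: field_simps)
qed simp

lemma one_minus_le_min_square_bound:
  fixes f :: "real \<Rightarrow> real"
  assumes f0: "f 0 = 1" and nonneg: "\<And>y. 0 \<le> y \<Longrightarrow> 0 \<le> f y"
    and antimono: "\<And>y z. 0 \<le> y \<Longrightarrow> y \<le> z \<Longrightarrow> f z \<le> f y"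
    and convex: "convex_on {0..} (\<lambda>s. f (sqrt s))"
    and lower: "\<And>y. 1 - y\<^sup>2 \<le> f y"
    and x: "0 < x" and \<xi>: "0 < \<xi>"
  shows "1 - f \<xi> \<le> min (1 - f x) (\<xi>\<^sup>2) + min 1 ((1 - f x) / x\<^sup>2 * \<xi>\<^sup>2)"
proof -
  have "0 \<le> 1 - f x"
    using antimono[of 0 x] f0 x by simp
  show ?thesis
  proof (cases "\<xi> \<le> x")
    case True
    then have "1 - f \<xi> \<le> min (1 - f x) (\<xi>\<^sup>2)"
      using antimono[of \<xi> x] lower[of \<xi>] \<xi> by simp
    moreover have "0 \<le> min 1 ((1 - f x) / x\<^sup>2 * \<xi>\<^sup>2)"
      using \<open>0 \<le> 1 - f x\<close> by simp
    ultimately show ?thesis by linarith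
  next
    case False
    have "f (sqrt 0) - f (sqrt (\<xi>\<^sup>2)) \<le> \<xi>\<^sup>2 / x\<^sup>2 * (f (sqrt 0) - f (sqrt (x\<^sup>2)))"
      using False x by (intro convex_on_secant_from_0[OF convex]) (auto intro!: power_mono)
    then have "1 - f \<xi> \<le> min 1 ((1 - f x) / x\<^sup>2 * \<xi>\<^sup>2)"
      using f0 nonneg[of \<xi>] x \<xi> by (simp add: ac_simps)
    moreover have "0 \<le> min (1 - f x) (\<xi>\<^sup>2)"
      using \<open>0 \<le> 1 - f x\<close> by simp
    ultimately show ?thesis by linarith
  qed
qed

text \<open>No integrability of \<open>F\<close> is needed: a non-integrable \<open>F\<close> has Lebesgue integral \<open>0 \<le> I\<close>.\<close>

lemma set_integral_le_has_integral:
  fixes F G :: "'a::euclidean_space \<Rightarrow> real"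
  assumes S: "S \<in> sets borel" and cont: "continuous_on S G" and G: "(G has_integral I) S"
    and nonneg: "\<And>\<xi>. \<xi> \<in> S \<Longrightarrow> 0 \<le> G \<xi>" and le: "\<And>\<xi>. \<xi> \<in> S \<Longrightarrow> F \<xi> \<le> G \<xi>"
  shows "(LBINT \<xi>:S. F \<xi>) \<le> I"
proof -
  have "G absolutely_integrable_on S"
    using G nonneg by (intro nonnegative_absolutely_integrable_1) auto
  moreover have "(\<lambda>\<xi>. indicator S \<xi> *\<^sub>R G \<xi>) \<in> borel_measurable lborel"
    using borel_measurable_continuous_on_indicator[OF S cont] by simp
  ultimately have int: "set_integrable lborel S G"
    unfolding set_integrable_def by (simp add: integrable_completion)
  have "(LBINT \<xi>:S. F \<xi>) \<le> (LBINT \<xi>:S. G \<xi>)"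
    unfolding set_lebesgue_integral_def
  proof (rule integral_mono_AE')
    show "integrable lborel (\<lambda>\<xi>. indicator S \<xi> *\<^sub>R G \<xi>)"
      using int unfolding set_integrable_def .
  qed (use le nonneg in \<open>auto intro!: AE_I2 simp: indicator_def\<close>)
  also have "\<dots> = I"
    using set_borel_integral_eq_integral(2)[OF int] G by (simp add: integral_unique)
  finally show ?thesis .
qed

lemma V1_weighted_integral_le:
  fixes \<alpha> x :: real and f :: "real \<Rightarrow> real"
  assumes \<alpha>: "0 < \<alpha>" "\<alpha> < 1" and f: "f \<in> V1 \<alpha>" and x: "0 < x"
  shows "(LBINT \<xi>:{0<..}. (1 - f \<xi>) / \<xi> powr (1 + 2*\<alpha>))
           \<le> ((1 - f x) powr (1 - \<alpha>) + (1 - f x) powr \<alpha> * x powr (- 2*\<alpha>)) / (2*\<alpha>*(1 - \<alpha>))"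
proof -
  have f0: "f 0 = 1" and nonneg: "\<And>y. 0 \<le> y \<Longrightarrow> 0 \<le> f y"
    and antimono: "\<And>y z. 0 \<le> y \<Longrightarrow> y \<le> z \<Longrightarrow> f z \<le> f y"
    and convex: "convex_on {0..} (\<lambda>s. f (sqrt s))"
    and lower: "\<And>y. 1 - y\<^sup>2 \<le> f y"
    using f unfolding V1_def by (auto simp: max_def split: if_splits)
  define t where "t = 1 - f x"
  have "0 \<le> t"
    using antimono[of 0 x] f0 x by (simp add: t_def)
  define G where "G = (\<lambda>\<xi>. (min t (\<xi>\<^sup>2) + min 1 (t / x\<^sup>2 * \<xi>\<^sup>2)) * \<xi> powr (-1 - 2*\<alpha>))"
  have "x\<^sup>2 = x powr 2"
    using x by simp
  then have "(x\<^sup>2) powr \<alpha> = x powr (2*\<alpha>)"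
    by (simp only: powr_powr)
  then have "(t / x\<^sup>2) powr \<alpha> = t powr \<alpha> / x powr (2*\<alpha>)"
    using \<open>0 \<le> t\<close> by (simp add: powr_divide)
  also have "\<dots> = t powr \<alpha> * x powr (- 2*\<alpha>)"
    by (simp add: powr_minus divide_inverse)
  finally have "(G has_integral (t powr (1 - \<alpha>) + t powr \<alpha> * x powr (- 2*\<alpha>)) / (2*\<alpha>*(1 - \<alpha>))) {0<..}"
    using has_integral_add[OF has_integral_min_scaled_square_powr[of \<alpha> t 1]
                              has_integral_min_scaled_square_powr[of \<alpha> 1 "t / x\<^sup>2"]] \<alpha> \<open>0 \<le> t\<close>
    by (simp add: G_def distrib_right add_divide_distrib)
  moreover have "(1 - f \<xi>) / \<xi> powr (1 + 2*\<alpha>) \<le> G \<xi>" if "0 < \<xi>" for \<xi>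
  proof -
    have "(1 - f \<xi>) / \<xi> powr (1 + 2*\<alpha>) = (1 - f \<xi>) * \<xi> powr (-1 - 2*\<alpha>)"
      using powr_minus[of \<xi> "1 + 2*\<alpha>"] by (simp add: divide_inverse)
    also have "\<dots> \<le> G \<xi>"
      unfolding G_def t_def
      using one_minus_le_min_square_bound[OF f0 nonneg antimono convex lower x that]
      by (rule mult_right_mono) simp_all
    finally show ?thesis .
  qed
  moreover have "continuous_on {0<..} G"
    unfolding G_def by (intro continuous_intros) auto
  moreover have "0 \<le> G \<xi>" if "0 < \<xi>" for \<xi>
    unfolding G_def using \<open>0 \<le> t\<close> by simp
  ultimately show ?thesis
    unfolding t_def by (intro set_integral_le_has_integral) auto
qed

lemma c1_pos: "0 < \<alpha> \<Longrightarrow> \<alpha> < 1 \<Longrightarrow> 0 < c1 \<alpha>"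
  unfolding c1_def by (intro divide_pos_pos mult_pos_pos Gamma_real_pos) auto

theorem mainTheorem4:
  fixes \<alpha> x :: real and f :: "real \<Rightarrow> real"
  assumes "0 < \<alpha>" and "\<alpha> < 1" and "f \<in> V1 \<alpha>" and "0 < x"
  shows "cf \<alpha> f \<le> (1 + 2*\<alpha>) / (3 * (1 - \<alpha>)) * c1 \<alpha>
           * (1 - f x) powr (min (1 - \<alpha>) \<alpha>) * (1 + x powr (- 2*\<alpha>))"
proof -
  define t where "t = 1 - f x"
  define X where "X = x powr (- 2*\<alpha>)"
  define m where "m = min (1 - \<alpha>) \<alpha>"
  have "0 \<le> t" "t \<le> 1"
    using assms(3,4) unfolding V1_def t_def by (auto dest: spec[of _ 0] spec[of _ x])
  then have "t powr (1 - \<alpha>) \<le> t powr m" "t powr \<alpha> \<le> t powr m"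
    unfolding m_def by (auto intro: powr_mono')
  then have bound: "t powr (1 - \<alpha>) + t powr \<alpha> * X \<le> t powr m * (1 + X)"
    unfolding X_def by (simp add: distrib_left add_mono mult_right_mono)
  have C: "0 \<le> 2*\<alpha>*(1 + 2*\<alpha>) / 3 * c1 \<alpha>"
    using c1_pos[OF assms(1,2)] assms(1) by simp
  have "cf \<alpha> f \<le> 2*\<alpha>*(1 + 2*\<alpha>) / 3 * c1 \<alpha> * ((t powr (1 - \<alpha>) + t powr \<alpha> * X) / (2*\<alpha>*(1 - \<alpha>)))"
    unfolding cf_def t_def X_def using V1_weighted_integral_le[OF assms] C by (rule mult_left_mono)
  also have "\<dots> \<le> 2*\<alpha>*(1 + 2*\<alpha>) / 3 * c1 \<alpha> * (t powr m * (1 + X) / (2*\<alpha>*(1 - \<alpha>)))"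
    using bound C assms(1,2) by (intro mult_left_mono divide_right_mono) auto
  also have "\<dots> = (1 + 2*\<alpha>) / (3 * (1 - \<alpha>)) * c1 \<alpha> * t powr m * (1 + X)"
    using assms(1,2) by (simp add: field_simps)
  finally show ?thesis
    unfolding t_def m_def X_def .
qed

end
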